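(* Let $h(t),\beta(t)$ be arbitrary smooth functions on an interval $I$ and $a,b,c,s$ real constants. Let $\Lambda(t)$ be an antiderivative of $\beta(t)-ah(t)$, fix $t_0\in I$, and set $$q(t)=e^{2\Lambda(t)}\Big((2a-b)s\int_{t_0}^te^{-2\Lambda(\tau)}\,d\tau+c\Big),$$ so that $q'=2(\beta-ah)q+(2a-b)s$. Define $$u=asyz+(\beta-ah)x,\quad v=-\beta y,\quad w=ahz,$$ $$H^1=ayz\,q(t)+\Big(\frac b2-a\Big)x,\quad H^2=-\frac b2y,\quad H^3=az,$$ $$p=-\rho\Big((\beta'-ah'+(\beta-ah)^2)\frac{x^2}{2}+(\beta^2-\beta')\frac{y^2}{2}+(ah'+a^2h^2)\frac{z^2}{2}-\mu_0a^2q^2\frac{y^2z^2}{2}-\mu_0aq\Big(\frac b2-a\Big)xyz\Big)+\theta(t),$$ with $\theta$ arbitrary. Then $\mathbf v=(u,v,w)^t$, $\mathbf H=(H^1,H^2,H^3)^t$ and $p$ solve the MHD system on $I\times\mathbb R^3$.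
   Context: Throughout, $\nu,\eta,\mu_0,\rho$ are positive constants. The MHD system for $\mathbf v=(u,v,w)^t$, $\mathbf H=(H^1,H^2,H^3)^t$, $p$, functions of $(t,x,y,z)$, is $$\nabla\cdot\mathbf v=0,\quad \mathbf v_t+(\mathbf v\cdot\nabla)\mathbf v-\mu_0(\mathbf H\times\operatorname{rot}\mathbf H)+\tfrac1\rho\nabla p=\nu\Delta\mathbf v,\quad \nabla\cdot\mathbf H=0,\quad \mathbf H_t=\operatorname{rot}(\mathbf v\times\mathbf H)+\eta\Delta\mathbf H,$$ with $\operatorname{rot}$ the curl and $\Delta$ the componentwise Laplacian in $(x,y,z)$. A prime denotes $d/dt$. *)

theory Defs
  imports "HOL-Analysis.Analysis"
begin

type_synonym field4 = "real \<Rightarrow> real \<Rightarrow> real \<Rightarrow> real \<Rightarrow> real"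

definition pt :: "field4 \<Rightarrow> field4" where
  "pt f = (\<lambda>t x y z. deriv (\<lambda>\<xi>. f \<xi> x y z) t)"
definition px :: "field4 \<Rightarrow> field4" where
  "px f = (\<lambda>t x y z. deriv (\<lambda>\<xi>. f t \<xi> y z) x)"
definition py :: "field4 \<Rightarrow> field4" where
  "py f = (\<lambda>t x y z. deriv (\<lambda>\<xi>. f t x \<xi> z) y)"
definition pz :: "field4 \<Rightarrow> field4" where
  "pz f = (\<lambda>t x y z. deriv (\<lambda>\<xi>. f t x y \<xi>) z)"

definition lap :: "field4 \<Rightarrow> field4" where
  "lap f = (\<lambda>t x y z. px (px f) t x y z + py (py f) t x y z + pz (pz f) t x y z)"

definition sdiff :: "field4 \<Rightarrow> real \<Rightarrow> real \<Rightarrow> real \<Rightarrow> real \<Rightarrow> bool" where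
  "sdiff f t x y z \<longleftrightarrow>
     (\<lambda>\<xi>. f t \<xi> y z) differentiable (at x) \<and>
     (\<lambda>\<xi>. f t x \<xi> z) differentiable (at y) \<and>
     (\<lambda>\<xi>. f t x y \<xi>) differentiable (at z)"

definition regular_field :: "real set \<Rightarrow> field4 \<Rightarrow> bool" where
  "regular_field I f \<longleftrightarrow> (\<forall>t\<in>I. \<forall>x y z.
     (\<lambda>\<xi>. f \<xi> x y z) differentiable (at t) \<and> sdiff f t x y z \<and>
     sdiff (px f) t x y z \<and> sdiff (py f) t x y z \<and> sdiff (pz f) t x y z)"

text \<open>The MHD system on I x R^3 for v = (u,v,w), H = (H1,H2,H3), pressure p.
  rot H = (R1,R2,R3), v x H = (E1,E2,E3), H x rot H = (F1,F2,F3).\<close>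
definition MHD_solution ::
  "real \<Rightarrow> real \<Rightarrow> real \<Rightarrow> real \<Rightarrow> real set \<Rightarrow>
   field4 \<Rightarrow> field4 \<Rightarrow> field4 \<Rightarrow> field4 \<Rightarrow> field4 \<Rightarrow> field4 \<Rightarrow> field4 \<Rightarrow> bool" where
  "MHD_solution \<nu> \<eta> \<mu>0 \<rho> I u v w H1 H2 H3 p \<longleftrightarrow>
    regular_field I u \<and> regular_field I v \<and> regular_field I w \<and>
    regular_field I H1 \<and> regular_field I H2 \<and> regular_field I H3 \<and>
    (\<forall>t\<in>I. \<forall>x y z. sdiff p t x y z) \<and>
    (let R1 = (\<lambda>t x y z. py H3 t x y z - pz H2 t x y z);
         R2 = (\<lambda>t x y z. pz H1 t x y z - px H3 t x y z);
         R3 = (\<lambda>t x y z. px H2 t x y z - py H1 t x y z);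
         F1 = (\<lambda>t x y z. H2 t x y z * R3 t x y z - H3 t x y z * R2 t x y z);
         F2 = (\<lambda>t x y z. H3 t x y z * R1 t x y z - H1 t x y z * R3 t x y z);
         F3 = (\<lambda>t x y z. H1 t x y z * R2 t x y z - H2 t x y z * R1 t x y z);
         E1 = (\<lambda>t x y z. v t x y z * H3 t x y z - w t x y z * H2 t x y z);
         E2 = (\<lambda>t x y z. w t x y z * H1 t x y z - u t x y z * H3 t x y z);
         E3 = (\<lambda>t x y z. u t x y z * H2 t x y z - v t x y z * H1 t x y z);
         adv = (\<lambda>f t x y z. u t x y z * px f t x y z + v t x y z * py f t x y z
                            + w t x y z * pz f t x y z)
     in \<forall>t\<in>I. \<forall>x y z.
       px u t x y z + py v t x y z + pz w t x y z = 0 \<and>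
       pt u t x y z + adv u t x y z - \<mu>0 * F1 t x y z + (1/\<rho>) * px p t x y z
          = \<nu> * lap u t x y z \<and>
       pt v t x y z + adv v t x y z - \<mu>0 * F2 t x y z + (1/\<rho>) * py p t x y z
          = \<nu> * lap v t x y z \<and>
       pt w t x y z + adv w t x y z - \<mu>0 * F3 t x y z + (1/\<rho>) * pz p t x y z
          = \<nu> * lap w t x y z \<and>
       px H1 t x y z + py H2 t x y z + pz H3 t x y z = 0 \<and>
       pt H1 t x y z = py E3 t x y z - pz E2 t x y z + \<eta> * lap H1 t x y z \<and>
       pt H2 t x y z = pz E1 t x y z - px E3 t x y z + \<eta> * lap H2 t x y z \<and>
       pt H3 t x y z = px E2 t x y z - py E1 t x y z + \<eta> * lap H3 t x y z)"

definition smooth_on :: "real set \<Rightarrow> (real \<Rightarrow> real) \<Rightarrow> bool" where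
  "smooth_on I f \<longleftrightarrow> (\<forall>n. \<forall>t\<in>I. ((deriv ^^ n) f) differentiable (at t))"

end

theory Submission
  imports Defs
begin

(* All fields of the ansatz are polynomials in (x,y,z) of degree at most one in
   each variable, with time-dependent coefficients.  Hence their spatial derivatives can be
   tabulated in closed form, all their Laplacians vanish (so the viscous and resistive terms
   drop out), and every equation of the MHD system becomes a polynomial identity in (x,y,z)
   whose coefficients involve only h, beta, q and their time derivatives.  These identities
   hold exactly because q solves the linear ODE  q' = 2 (beta - a h) q + (2a - b) s. *)

lemma interval_integral_has_derivative_open:
  fixes f :: "real \<Rightarrow> real"
  assumes I: "is_interval I" "open I" and t: "t \<in> I" and t0: "t0 \<in> I"
    and cont: "continuous_on I f"
  shows "((\<lambda>u. LBINT y=t0..u. f y) has_real_derivative f t) (at t)"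
proof -
  obtain e where e: "e > 0" "ball t e \<subseteq> I" using I(2) t open_contains_ball by blast
  define d where "d = min t0 (t - e/2)"
  define E where "E = max t0 (t + e/2)"
  have dI: "d \<in> I" using e t0 unfolding d_def min_def by (auto simp: dist_real_def)
  have EI: "E \<in> I" using e t0 unfolding E_def max_def by (auto simp: dist_real_def)
  have sub: "{d..E} \<subseteq> I"
    using I(1) dI EI unfolding is_interval_1 by (meson atLeastAtMost_iff subsetI)
  have "((\<lambda>u. LBINT y=t0..u. f y) has_vector_derivative f t) (at t within {d..E})"
    by (rule interval_integral_FTC2)
      (use continuous_on_subset[OF cont sub] e in \<open>simp_all add: d_def E_def\<close>)
  then have "((\<lambda>u. LBINT y=t0..u. f y) has_vector_derivative f t) (at t within {d<..<E})"
    by (rule has_vector_derivative_within_subset) auto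
  then have "((\<lambda>u. LBINT y=t0..u. f y) has_vector_derivative f t) (at t)"
    using e by (subst (asm) has_vector_derivative_within_open) (auto simp: d_def E_def)
  then show ?thesis by (simp add: has_real_derivative_iff_has_vector_derivative)
qed

lemma variation_of_constants:
  fixes \<Lambda> g q :: "real \<Rightarrow> real" and k c t0 :: real
  assumes I: "is_interval I" "open I" and t0: "t0 \<in> I"
    and Lam: "\<forall>t\<in>I. (\<Lambda> has_real_derivative g t) (at t)"
    and q: "\<forall>t\<in>I. q t = exp (2 * \<Lambda> t) * (k * (LBINT \<tau>=t0..t. exp (- 2 * \<Lambda> \<tau>)) + c)"
    and t: "t \<in> I"
  shows "(q has_real_derivative 2 * g t * q t + k) (at t)"
proof -
  define F where "F = (\<lambda>u. LBINT \<tau>=t0..u. exp (- 2 * \<Lambda> \<tau>))"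
  have "continuous_on I \<Lambda>"
    using Lam by (intro continuous_at_imp_continuous_on ballI) (auto intro: DERIV_isCont)
  then have "continuous_on I (\<lambda>\<tau>. exp (- 2 * \<Lambda> \<tau>))" by (intro continuous_intros)
  then have F': "(F has_real_derivative exp (- 2 * \<Lambda> t)) (at t)"
    unfolding F_def by (rule interval_integral_has_derivative_open[OF I t t0])
  have \<Lambda>': "(\<Lambda> has_real_derivative g t) (at t)" using Lam t by blast
  have inverse: "exp (2 * \<Lambda> t) * exp (- 2 * \<Lambda> t) = 1" by (simp flip: exp_add)
  have "((\<lambda>u. exp (2 * \<Lambda> u) * (k * F u + c)) has_real_derivative
          2 * g t * (exp (2 * \<Lambda> t) * (k * F t + c)) + k) (at t)"
    by (rule derivative_eq_intros F' \<Lambda>' refl | simp)+ (use inverse in \<open>simp add: algebra_simps\<close>)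
  then have "(q has_real_derivative 2 * g t * (exp (2 * \<Lambda> t) * (k * F t + c)) + k) (at t)"
    by (rule has_field_derivative_transform_within_open[OF _ I(2) t]) (use q F_def in auto)
  then show ?thesis using q t F_def by simp
qed

lemma smooth_on_has_derivative:
  assumes "smooth_on I f" "t \<in> I"
  shows "(f has_real_derivative deriv f t) (at t)"
proof -
  have "((deriv ^^ 0) f) differentiable (at t)" using assms unfolding smooth_on_def by blast
  then show ?thesis by (simp add: DERIV_deriv_iff_real_differentiable)
qed

lemma px_eq: "(\<And>t x y z. ((\<lambda>\<xi>. f t \<xi> y z) has_real_derivative D t x y z) (at x)) \<Longrightarrow> px f = D"
  unfolding px_def by (intro ext DERIV_imp_deriv)

lemma py_eq: "(\<And>t x y z. ((\<lambda>\<xi>. f t x \<xi> z) has_real_derivative D t x y z) (at y)) \<Longrightarrow> py f = D"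
  unfolding py_def by (intro ext DERIV_imp_deriv)

lemma pz_eq: "(\<And>t x y z. ((\<lambda>\<xi>. f t x y \<xi>) has_real_derivative D t x y z) (at z)) \<Longrightarrow> pz f = D"
  unfolding pz_def by (intro ext DERIV_imp_deriv)

lemma pt_eq: "((\<lambda>\<xi>. f \<xi> x y z) has_real_derivative D) (at t) \<Longrightarrow> pt f t x y z = D"
  unfolding pt_def by (intro DERIV_imp_deriv)

lemma lap_multiaffine:
  assumes "px f = (\<lambda>t x y z. A t y z)" "py f = (\<lambda>t x y z. B t x z)" "pz f = (\<lambda>t x y z. C t x y)"
  shows "lap f = (\<lambda>t x y z. 0)"
proof -
  have "px (\<lambda>t x y z. A t y z) = (\<lambda>t x y z. 0)" "py (\<lambda>t x y z. B t x z) = (\<lambda>t x y z. 0)"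
       "pz (\<lambda>t x y z. C t x y) = (\<lambda>t x y z. 0)"
    by (rule px_eq py_eq pz_eq; auto intro!: derivative_eq_intros)+
  then show ?thesis unfolding lap_def assms by simp
qed

section \<open>The ansatz and its derivatives\<close>

definition vel_u :: "real \<Rightarrow> real \<Rightarrow> (real \<Rightarrow> real) \<Rightarrow> (real \<Rightarrow> real) \<Rightarrow> field4" where
  "vel_u a s \<beta> h = (\<lambda>t x y z. a * s * y * z + (\<beta> t - a * h t) * x)"

definition vel_v :: "(real \<Rightarrow> real) \<Rightarrow> field4" where
  "vel_v \<beta> = (\<lambda>t x y z. - \<beta> t * y)"

definition vel_w :: "real \<Rightarrow> (real \<Rightarrow> real) \<Rightarrow> field4" where
  "vel_w a h = (\<lambda>t x y z. a * h t * z)"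

definition mag_1 :: "real \<Rightarrow> real \<Rightarrow> (real \<Rightarrow> real) \<Rightarrow> field4" where
  "mag_1 a b q = (\<lambda>t x y z. a * y * z * q t + (b/2 - a) * x)"

definition mag_2 :: "real \<Rightarrow> field4" where
  "mag_2 b = (\<lambda>t x y z. - (b/2) * y)"

definition mag_3 :: "real \<Rightarrow> field4" where
  "mag_3 a = (\<lambda>t x y z. a * z)"

definition pressure ::
  "real \<Rightarrow> real \<Rightarrow> real \<Rightarrow> real \<Rightarrow> (real \<Rightarrow> real) \<Rightarrow> (real \<Rightarrow> real) \<Rightarrow> (real \<Rightarrow> real)
     \<Rightarrow> (real \<Rightarrow> real) \<Rightarrow> field4" where
  "pressure \<rho> \<mu>0 a b h \<beta> q \<theta> = (\<lambda>t x y z. - \<rho> * (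
        (deriv \<beta> t - a * deriv h t + (\<beta> t - a * h t)^2) * x^2 / 2
      + (\<beta> t ^ 2 - deriv \<beta> t) * y^2 / 2
      + (a * deriv h t + a^2 * h t ^ 2) * z^2 / 2
      - \<mu>0 * a^2 * q t ^ 2 * y^2 * z^2 / 2
      - \<mu>0 * a * q t * (b/2 - a) * x * y * z) + \<theta> t)"

lemma vel_spatial_derivatives:
  shows "px (vel_u a s \<beta> h) = (\<lambda>t x y z. \<beta> t - a * h t)"
    and "py (vel_u a s \<beta> h) = (\<lambda>t x y z. a * s * z)"
    and "pz (vel_u a s \<beta> h) = (\<lambda>t x y z. a * s * y)"
    and "px (vel_v \<beta>) = (\<lambda>t x y z. 0)"
    and "py (vel_v \<beta>) = (\<lambda>t x y z. - \<beta> t)"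
    and "pz (vel_v \<beta>) = (\<lambda>t x y z. 0)"
    and "px (vel_w a h) = (\<lambda>t x y z. 0)"
    and "py (vel_w a h) = (\<lambda>t x y z. 0)"
    and "pz (vel_w a h) = (\<lambda>t x y z. a * h t)"
  unfolding vel_u_def vel_v_def vel_w_def
  by (rule px_eq py_eq pz_eq; auto intro!: derivative_eq_intros)+

lemma mag_spatial_derivatives:
  shows "px (mag_1 a b q) = (\<lambda>t x y z. b/2 - a)"
    and "py (mag_1 a b q) = (\<lambda>t x y z. a * z * q t)"
    and "pz (mag_1 a b q) = (\<lambda>t x y z. a * y * q t)"
    and "px (mag_2 b) = (\<lambda>t x y z. 0)"
    and "py (mag_2 b) = (\<lambda>t x y z. - (b/2))"
    and "pz (mag_2 b) = (\<lambda>t x y z. 0)"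
    and "px (mag_3 a) = (\<lambda>t x y z. 0)"
    and "py (mag_3 a) = (\<lambda>t x y z. 0)"
    and "pz (mag_3 a) = (\<lambda>t x y z. a)"
  unfolding mag_1_def mag_2_def mag_3_def
  by (rule px_eq py_eq pz_eq; auto intro!: derivative_eq_intros)+

text \<open>All six fields are multi-affine.\<close>
lemma ansatz_harmonic:
  shows "lap (vel_u a s \<beta> h) = (\<lambda>t x y z. 0)" and "lap (vel_v \<beta>) = (\<lambda>t x y z. 0)"
    and "lap (vel_w a h) = (\<lambda>t x y z. 0)" and "lap (mag_1 a b q) = (\<lambda>t x y z. 0)"
    and "lap (mag_2 b) = (\<lambda>t x y z. 0)" and "lap (mag_3 a) = (\<lambda>t x y z. 0)"
  by (rule lap_multiaffine; simp only: vel_spatial_derivatives mag_spatial_derivatives; rule refl)+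

lemma pressure_gradient:
  shows "px (pressure \<rho> \<mu>0 a b h \<beta> q \<theta>) = (\<lambda>t x y z. - \<rho> * (
            (deriv \<beta> t - a * deriv h t + (\<beta> t - a * h t)^2) * x
          - \<mu>0 * a * q t * (b/2 - a) * y * z))"
    and "py (pressure \<rho> \<mu>0 a b h \<beta> q \<theta>) = (\<lambda>t x y z. - \<rho> * ((\<beta> t ^ 2 - deriv \<beta> t) * y
          - \<mu>0 * a^2 * q t ^ 2 * y * z^2 - \<mu>0 * a * q t * (b/2 - a) * x * z))"
    and "pz (pressure \<rho> \<mu>0 a b h \<beta> q \<theta>) = (\<lambda>t x y z. - \<rho> * ((a * deriv h t + a^2 * h t ^ 2) * z
          - \<mu>0 * a^2 * q t ^ 2 * y^2 * z - \<mu>0 * a * q t * (b/2 - a) * x * y))"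
  unfolding pressure_def
  by (rule px_eq py_eq pz_eq; auto intro!: derivative_eq_intros simp: field_simps power2_eq_square)+

text \<open>Spatial derivatives of the components of the electric field v \<times> H entering
  the induction equation rot (v \<times> H).\<close>
lemma induction_derivatives:
  fixes a b s :: real and \<beta> h q :: "real \<Rightarrow> real"
  defines "U \<equiv> vel_u a s \<beta> h" and "V \<equiv> vel_v \<beta>" and "W \<equiv> vel_w a h"
    and "H1 \<equiv> mag_1 a b q" and "H2 \<equiv> mag_2 b" and "H3 \<equiv> mag_3 a"
  shows "py (\<lambda>t x y z. U t x y z * H2 t x y z - V t x y z * H1 t x y z) =
           (\<lambda>t x y z. (a * s * z) * (- (b/2) * y) + (a * s * y * z + (\<beta> t - a * h t) * x) * (- (b/2))
              + \<beta> t * (a * y * z * q t + (b/2 - a) * x) + \<beta> t * y * (a * z * q t))"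
    and "px (\<lambda>t x y z. U t x y z * H2 t x y z - V t x y z * H1 t x y z) =
           (\<lambda>t x y z. (\<beta> t - a * h t) * (- (b/2) * y) + \<beta> t * y * (b/2 - a))"
    and "pz (\<lambda>t x y z. W t x y z * H1 t x y z - U t x y z * H3 t x y z) =
           (\<lambda>t x y z. (a * h t) * (a * y * z * q t + (b/2 - a) * x) + (a * h t * z) * (a * y * q t)
              - (a * s * y) * (a * z) - (a * s * y * z + (\<beta> t - a * h t) * x) * a)"
    and "px (\<lambda>t x y z. W t x y z * H1 t x y z - U t x y z * H3 t x y z) =
           (\<lambda>t x y z. (a * h t * z) * (b/2 - a) - (\<beta> t - a * h t) * (a * z))"
    and "pz (\<lambda>t x y z. V t x y z * H3 t x y z - W t x y z * H2 t x y z) =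
           (\<lambda>t x y z. (- \<beta> t * y) * a - (a * h t) * (- (b/2) * y))"
    and "py (\<lambda>t x y z. V t x y z * H3 t x y z - W t x y z * H2 t x y z) =
           (\<lambda>t x y z. (- \<beta> t) * (a * z) - (a * h t * z) * (- (b/2)))"
  unfolding assms vel_u_def vel_v_def vel_w_def mag_1_def mag_2_def mag_3_def
  by (rule px_eq py_eq pz_eq; auto intro!: derivative_eq_intros simp: field_simps)+

lemma ansatz_time_derivatives:
  assumes \<beta>': "(\<beta> has_real_derivative deriv \<beta> t) (at t)"
    and h': "(h has_real_derivative deriv h t) (at t)"
    and q': "(q has_real_derivative q1) (at t)"
  shows "pt (vel_u a s \<beta> h) t x y z = (deriv \<beta> t - a * deriv h t) * x"
    and "pt (vel_v \<beta>) t x y z = - deriv \<beta> t * y"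
    and "pt (vel_w a h) t x y z = a * deriv h t * z"
    and "pt (mag_1 a b q) t x y z = a * y * z * q1"
    and "pt (mag_2 b) t x y z = 0"
    and "pt (mag_3 a) t x y z = 0"
  unfolding vel_u_def vel_v_def vel_w_def mag_1_def mag_2_def mag_3_def
  by (rule pt_eq; auto intro!: derivative_eq_intros \<beta>' h' q')+

lemma ansatz_regular:
  assumes \<beta>': "\<And>t. t \<in> I \<Longrightarrow> (\<beta> has_real_derivative \<beta>1 t) (at t)"
    and h': "\<And>t. t \<in> I \<Longrightarrow> (h has_real_derivative h1 t) (at t)"
    and q': "\<And>t. t \<in> I \<Longrightarrow> (q has_real_derivative q1 t) (at t)"
  shows "regular_field I (vel_u a s \<beta> h)" "regular_field I (vel_v \<beta>)"
    "regular_field I (vel_w a h)" "regular_field I (mag_1 a b q)"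
    "regular_field I (mag_2 b)" "regular_field I (mag_3 a)"
    "\<forall>t\<in>I. \<forall>x y z. sdiff (pressure \<rho> \<mu>0 a b h \<beta> q \<theta>) t x y z"
proof -
  show "regular_field I (vel_u a s \<beta> h)" "regular_field I (vel_v \<beta>)" "regular_field I (vel_w a h)"
    unfolding regular_field_def sdiff_def vel_spatial_derivatives
    by (auto simp: vel_u_def vel_v_def vel_w_def real_differentiable_def
        intro!: derivative_eq_intros \<beta>' h')
  show "regular_field I (mag_1 a b q)" "regular_field I (mag_2 b)" "regular_field I (mag_3 a)"
    unfolding regular_field_def sdiff_def mag_spatial_derivatives
    by (auto simp: mag_1_def mag_2_def mag_3_def real_differentiable_def
        intro!: derivative_eq_intros q')
  show "\<forall>t\<in>I. \<forall>x y z. sdiff (pressure \<rho> \<mu>0 a b h \<beta> q \<theta>) t x y z"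
    unfolding sdiff_def
    by (auto simp: pressure_def real_differentiable_def intro!: derivative_eq_intros)
qed

lemma ansatz_solves_MHD:
  assumes \<rho>: "\<rho> \<noteq> 0"
    and \<beta>': "\<And>t. t \<in> I \<Longrightarrow> (\<beta> has_real_derivative deriv \<beta> t) (at t)"
    and h': "\<And>t. t \<in> I \<Longrightarrow> (h has_real_derivative deriv h t) (at t)"
    and q': "\<And>t. t \<in> I \<Longrightarrow>
               (q has_real_derivative 2 * (\<beta> t - a * h t) * q t + (2*a - b) * s) (at t)"
  shows "MHD_solution \<nu> \<eta> \<mu>0 \<rho> I (vel_u a s \<beta> h) (vel_v \<beta>) (vel_w a h)
           (mag_1 a b q) (mag_2 b) (mag_3 a) (pressure \<rho> \<mu>0 a b h \<beta> q \<theta>)"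
proof -
  note regular = ansatz_regular[OF \<beta>' h' q']
  note time = ansatz_time_derivatives[OF \<beta>' h' q']
  show ?thesis
    unfolding MHD_solution_def Let_def
    apply (intro conjI regular ballI allI)
    apply (simp_all only: time vel_spatial_derivatives mag_spatial_derivatives ansatz_harmonic
        induction_derivatives pressure_gradient)
    using \<rho> by (simp_all add: vel_u_def vel_v_def vel_w_def mag_1_def mag_2_def mag_3_def
        field_simps power2_eq_square)
qed

theorem theorem3p1:
  fixes \<nu> \<eta> \<mu>0 \<rho> a b c s t0 :: real
    and I :: "real set"
    and h \<beta> \<Lambda> q \<theta> :: "real \<Rightarrow> real"
  assumes pos: "\<nu> > 0" "\<eta> > 0" "\<mu>0 > 0" "\<rho> > 0"
    and I_int: "is_interval I" "open I" "I \<noteq> {}"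
    and smooth: "smooth_on I h" "smooth_on I \<beta>"
    and Lam: "\<forall>t\<in>I. (\<Lambda> has_real_derivative (\<beta> t - a * h t)) (at t)"
    and t0: "t0 \<in> I"
    and q_def: "\<forall>t\<in>I. q t = exp (2 * \<Lambda> t) *
                  ((2*a - b) * s * (LBINT \<tau>=t0..t. exp (- 2 * \<Lambda> \<tau>)) + c)"
  shows "MHD_solution \<nu> \<eta> \<mu>0 \<rho> I
    (\<lambda>t x y z. a * s * y * z + (\<beta> t - a * h t) * x)
    (\<lambda>t x y z. - \<beta> t * y)
    (\<lambda>t x y z. a * h t * z)
    (\<lambda>t x y z. a * y * z * q t + (b/2 - a) * x)
    (\<lambda>t x y z. - (b/2) * y)
    (\<lambda>t x y z. a * z)
    (\<lambda>t x y z. - \<rho> * (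
        (deriv \<beta> t - a * deriv h t + (\<beta> t - a * h t)^2) * x^2 / 2
      + (\<beta> t ^ 2 - deriv \<beta> t) * y^2 / 2
      + (a * deriv h t + a^2 * h t ^ 2) * z^2 / 2
      - \<mu>0 * a^2 * q t ^ 2 * y^2 * z^2 / 2
      - \<mu>0 * a * q t * (b/2 - a) * x * y * z) + \<theta> t)"
proof -
  have \<beta>': "\<And>t. t \<in> I \<Longrightarrow> (\<beta> has_real_derivative deriv \<beta> t) (at t)"
    and h': "\<And>t. t \<in> I \<Longrightarrow> (h has_real_derivative deriv h t) (at t)"
    using smooth by (auto intro: smooth_on_has_derivative)
  have q': "\<And>t. t \<in> I \<Longrightarrow>
              (q has_real_derivative 2 * (\<beta> t - a * h t) * q t + (2*a - b) * s) (at t)"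
    using variation_of_constants[OF I_int(1,2) t0 Lam q_def] by simp
  have "\<rho> \<noteq> 0" using pos(4) by simp
  from ansatz_solves_MHD[OF this \<beta>' h' q']
  show ?thesis
    unfolding vel_u_def vel_v_def vel_w_def mag_1_def mag_2_def mag_3_def pressure_def .
qed

end
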